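(* Let $F$ be a non-archimedean local field of characteristic zero with ring of integers $\mathfrak{o}$ and maximal ideal $\mathfrak{p}$. Let $a,b,c\in F$ with $d=b^2-4ac\neq0$ satisfy (A1) $a,b\in\mathfrak{o}$, $c\in\mathfrak{o}^\times$, and (A2) if $d\notin F^{\times2}$ then $d$ generates the discriminant ideal of $L/F$, and if $d\in F^{\times2}$ then $d\in\mathfrak{o}^\times$. Let $\xi_0=\frac{-b+\sqrt d}2$ and $\alpha=\frac{b+\sqrt d}{2c}$ if $L$ is a field, and $\xi_0=(\frac{-b+\sqrt d}2,\frac{-b-\sqrt d}2)$, $\alpha=(\frac{b+\sqrt d}{2c},\frac{b-\sqrt d}{2c})$ if $L=F\oplus F$. Then: (i) $\{1,\xi_0\}$ is a basis of the free $\mathfrak{o}$-module $\mathfrak{o}_L$, and so is $\{1,\alpha\}$; (ii) there is no $x\in\mathfrak{o}$ with $\alpha+x\in\mathfrak{P}$.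
   Context: $L=F(\sqrt d)$ if $d\notin F^{\times2}$, and $L=F\oplus F$ (with $F$ embedded diagonally) if $d\in F^{\times2}$. $\mathfrak{o}_L$ is the ring of integers of $L$ if $L$ is a field, and $\mathfrak{o}\oplus\mathfrak{o}$ otherwise. $\mathfrak{P}=\mathfrak{p}\mathfrak{o}_L$. *)

theory Defs
  imports Main "HOL-Library.Product_Plus"
begin

text \<open>A normalized discrete valuation on a field; the value at 0 is irrelevant
  (conventionally +infinity) and is never used.\<close>
definition discrete_valuation :: "('a::field \<Rightarrow> int) \<Rightarrow> bool" where
  "discrete_valuation v \<longleftrightarrow>
     (\<forall>x y. x \<noteq> 0 \<and> y \<noteq> 0 \<longrightarrow> v (x * y) = v x + v y) \<and>
     (\<forall>x y. x \<noteq> 0 \<and> y \<noteq> 0 \<and> x + y \<noteq> 0 \<longrightarrow> min (v x) (v y) \<le> v (x + y)) \<and>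
     (\<exists>\<pi>. \<pi> \<noteq> 0 \<and> v \<pi> = 1)"

definition val_ring :: "('a::field \<Rightarrow> int) \<Rightarrow> 'a set" where
  "val_ring v = {x. x = 0 \<or> 0 \<le> v x}"

definition max_ideal :: "('a::field \<Rightarrow> int) \<Rightarrow> 'a set" where
  "max_ideal v = {x. x = 0 \<or> 1 \<le> v x}"

definition val_units :: "('a::field \<Rightarrow> int) \<Rightarrow> 'a set" where
  "val_units v = {x. x \<noteq> 0 \<and> v x = 0}"

definition val_complete :: "('a::field \<Rightarrow> int) \<Rightarrow> bool" where
  "val_complete v \<longleftrightarrow>
     (\<forall>X :: nat \<Rightarrow> 'a.
        (\<forall>N::int. \<exists>M. \<forall>m\<ge>M. \<forall>n\<ge>M. X m - X n = 0 \<or> N \<le> v (X m - X n)) \<longrightarrow>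
        (\<exists>l. \<forall>N::int. \<exists>M. \<forall>n\<ge>M. X n - l = 0 \<or> N \<le> v (X n - l)))"

definition finite_residue_field :: "('a::field \<Rightarrow> int) \<Rightarrow> bool" where
  "finite_residue_field v \<longleftrightarrow>
     (\<exists>R. finite R \<and> R \<subseteq> val_ring v \<and>
          (\<forall>x\<in>val_ring v. \<exists>r\<in>R. x - r \<in> max_ideal v))"

text \<open>F (of characteristic zero via the type class field_char_0) is a non-archimedean
  local field with normalized valuation v: complete w.r.t. a discrete valuation with
  finite residue field.\<close>
definition nonarch_local_field :: "('a::field \<Rightarrow> int) \<Rightarrow> bool" where
  "nonarch_local_field v \<longleftrightarrow>
     discrete_valuation v \<and> val_complete v \<and> finite_residue_field v"

definition is_square_nz :: "'a::field \<Rightarrow> bool" where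
  "is_square_nz d \<longleftrightarrow> (\<exists>s. s \<noteq> 0 \<and> s ^ 2 = d)"

text \<open>Scalar multiplication by F (F embedded as (r,0) in F(sqrt d), diagonally in F+F;
  in both models it acts componentwise).\<close>
definition smul :: "'a::field \<Rightarrow> 'a \<times> 'a \<Rightarrow> 'a \<times> 'a" where
  "smul r z = (r * fst z, r * snd z)"

text \<open>Field case: L = F(sqrt d) = F[X]/(X^2 - d), the pair (u,w) standing for u + w sqrt d.\<close>
definition qmul :: "'a::field \<Rightarrow> 'a \<times> 'a \<Rightarrow> 'a \<times> 'a \<Rightarrow> 'a \<times> 'a" where
  "qmul d x y = (fst x * fst y + d * snd x * snd y, fst x * snd y + snd x * fst y)"

definition qpow :: "'a::field \<Rightarrow> 'a \<times> 'a \<Rightarrow> nat \<Rightarrow> 'a \<times> 'a" where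
  "qpow d z n = ((qmul d z) ^^ n) (1, 0)"

definition qtrace :: "'a::field \<times> 'a \<Rightarrow> 'a" where
  "qtrace z = 2 * fst z"

definition int_ring_field :: "('a::field \<Rightarrow> int) \<Rightarrow> 'a \<Rightarrow> ('a \<times> 'a) set" where
  "int_ring_field v d = {z. \<exists>n cs. 0 < n \<and> (\<forall>i<n. cs i \<in> val_ring v) \<and>
       qpow d z n + (\<Sum>i<n. smul (cs i) (qpow d z i)) = 0}"

definition qdisc :: "'a::field \<Rightarrow> 'a \<times> 'a \<Rightarrow> 'a \<times> 'a \<Rightarrow> 'a" where
  "qdisc d x y = qtrace (qmul d x x) * qtrace (qmul d y y) - qtrace (qmul d x y) * qtrace (qmul d y x)"

inductive_set o_ideal :: "('a::field \<Rightarrow> int) \<Rightarrow> 'a set \<Rightarrow> 'a set"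
  for v :: "'a \<Rightarrow> int" and S :: "'a set" where
  zero: "0 \<in> o_ideal v S"
| step: "r \<in> val_ring v \<Longrightarrow> s \<in> S \<Longrightarrow> y \<in> o_ideal v S \<Longrightarrow> r * s + y \<in> o_ideal v S"

definition disc_ideal_field :: "('a::field \<Rightarrow> int) \<Rightarrow> 'a \<Rightarrow> 'a set" where
  "disc_ideal_field v d =
     o_ideal v {qdisc d x y | x y. x \<in> int_ring_field v d \<and> y \<in> int_ring_field v d}"

definition int_ring_split :: "('a::field \<Rightarrow> int) \<Rightarrow> ('a \<times> 'a) set" where
  "int_ring_split v = val_ring v \<times> val_ring v"

text \<open>The ideal P = p o_L (o_L-module generated by p; in both models the action of p is
  via the scalar action).\<close>
inductive_set ext_ideal :: "('a::field \<Rightarrow> int) \<Rightarrow> ('a \<times> 'a) set \<Rightarrow> ('a \<times> 'a) set"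
  for v :: "'a \<Rightarrow> int" and OL :: "('a \<times> 'a) set" where
  zero: "0 \<in> ext_ideal v OL"
| step: "p \<in> max_ideal v \<Longrightarrow> z \<in> OL \<Longrightarrow> y \<in> ext_ideal v OL \<Longrightarrow> smul p z + y \<in> ext_ideal v OL"

definition is_o_basis :: "('a::field \<Rightarrow> int) \<Rightarrow> ('a \<times> 'a) set \<Rightarrow> 'a \<times> 'a \<Rightarrow> 'a \<times> 'a \<Rightarrow> bool" where
  "is_o_basis v OL e1 e2 \<longleftrightarrow> e1 \<in> OL \<and> e2 \<in> OL \<and>
     (\<forall>z\<in>OL. \<exists>!uw. fst uw \<in> val_ring v \<and> snd uw \<in> val_ring v \<and>
                   z = smul (fst uw) e1 + smul (snd uw) e2)"

end

theory Submission
  imports Defs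
begin

text \<open>View elements of \<open>L\<close> as vectors in \<open>F\<^sup>2\<close>. Suppose \<open>k \<cdot> det(x, z)\<close> is integral for all
  \<open>x, z \<in> \<o>\<^sub>L\<close>. Then any \<open>e\<^sub>1, e\<^sub>2 \<in> \<o>\<^sub>L\<close> with \<open>k \<cdot> det(e\<^sub>1, e\<^sub>2)\<close> a unit form an \<open>\<o>\<close>-basis, since
  the Cramer coordinates are quotients of such determinants by that unit; and \<open>e\<^sub>2 + x e\<^sub>1\<close> is
  never in \<open>\<P> = \<p>\<o>\<^sub>L\<close>, because \<open>k \<cdot> det(e\<^sub>1, -)\<close> maps \<open>\<P>\<close> into \<open>\<p>\<close> but is unchanged by the
  translation. When \<open>L\<close> splits, \<open>\<o>\<^sub>L = \<o>\<^sup>2\<close> and \<open>k = 1\<close>: the determinants of \<open>(1, 1)\<close> with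
  \<open>\<xi>\<^sub>0\<close> and \<open>\<alpha>\<close> are \<open>-\<surd>d\<close> and \<open>-\<surd>d / c\<close>, units because \<open>d\<close> is. When \<open>L\<close> is a field, the
  discriminant of \<open>x, z\<close> is \<open>(2 det(x, z))\<^sup>2 d\<close>, so (A2) allows \<open>k = 2\<close>, and
  \<open>2 det(1, \<xi>\<^sub>0) = 1\<close>, \<open>2 det(1, \<alpha>) = 1 / c\<close>.\<close>

locale discretely_valued =
  fixes v :: "'a::field \<Rightarrow> int"
  assumes discrete_valuation: "discrete_valuation v"
begin

lemma val_mult: "x \<noteq> 0 \<Longrightarrow> y \<noteq> 0 \<Longrightarrow> v (x * y) = v x + v y"
  using discrete_valuation unfolding discrete_valuation_def by blast

lemma val_add: "x \<noteq> 0 \<Longrightarrow> y \<noteq> 0 \<Longrightarrow> x + y \<noteq> 0 \<Longrightarrow> min (v x) (v y) \<le> v (x + y)"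
  using discrete_valuation unfolding discrete_valuation_def by blast

lemma val_one: "v 1 = 0"
  using val_mult[of 1 1] by simp

lemma val_uminus: "v (- x) = v x"
proof (cases "x = 0")
  case False
  have "v 1 = v (-1) + v (-1)" using val_mult[of "-1" "-1"] by simp
  then have "v (-1) = 0" using val_one by simp
  then show ?thesis using val_mult[of "-1" x] False by simp
qed simp

lemma val_inverse: "x \<noteq> 0 \<Longrightarrow> v (inverse x) = - v x"
  using val_mult[of x "inverse x"] val_one by simp

lemma val_ring_add: "x \<in> val_ring v \<Longrightarrow> y \<in> val_ring v \<Longrightarrow> x + y \<in> val_ring v"
  unfolding val_ring_def using val_add[of x y] by fastforce

lemma val_ring_mult: "x \<in> val_ring v \<Longrightarrow> y \<in> val_ring v \<Longrightarrow> x * y \<in> val_ring v"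
  unfolding val_ring_def using val_mult[of x y] by (cases "x = 0"; cases "y = 0") auto

lemma val_ring_uminus: "x \<in> val_ring v \<Longrightarrow> - x \<in> val_ring v"
  unfolding val_ring_def using val_uminus[of x] by auto

lemma val_ring_diff: "x \<in> val_ring v \<Longrightarrow> y \<in> val_ring v \<Longrightarrow> x - y \<in> val_ring v"
  using val_ring_add[of x "- y"] val_ring_uminus[of y] by simp

lemma one_in_val_ring: "1 \<in> val_ring v"
  unfolding val_ring_def using val_one by simp

lemma max_ideal_add: "x \<in> max_ideal v \<Longrightarrow> y \<in> max_ideal v \<Longrightarrow> x + y \<in> max_ideal v"
  unfolding max_ideal_def using val_add[of x y] by fastforce

lemma max_ideal_mult: "x \<in> max_ideal v \<Longrightarrow> y \<in> val_ring v \<Longrightarrow> x * y \<in> max_ideal v"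
  unfolding val_ring_def max_ideal_def using val_mult[of x y] by (cases "x = 0"; cases "y = 0") auto

lemma max_ideal_uminus: "x \<in> max_ideal v \<Longrightarrow> - x \<in> max_ideal v"
  unfolding max_ideal_def using val_uminus[of x] by auto

lemma max_ideal_subset_val_ring: "max_ideal v \<subseteq> val_ring v"
  unfolding max_ideal_def val_ring_def by auto

lemma val_units_subset_val_ring: "val_units v \<subseteq> val_ring v"
  unfolding val_units_def val_ring_def by auto

lemma val_units_disjoint_max_ideal: "x \<in> val_units v \<Longrightarrow> x \<notin> max_ideal v"
  unfolding val_units_def max_ideal_def by auto

lemma one_in_val_units: "1 \<in> val_units v"
  unfolding val_units_def using val_one by simp

lemma val_units_mult: "x \<in> val_units v \<Longrightarrow> y \<in> val_units v \<Longrightarrow> x * y \<in> val_units v"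
  unfolding val_units_def using val_mult by auto

lemma val_units_inverse: "x \<in> val_units v \<Longrightarrow> inverse x \<in> val_units v"
  unfolding val_units_def using val_inverse by auto

lemma val_units_uminus: "x \<in> val_units v \<Longrightarrow> - x \<in> val_units v"
  unfolding val_units_def using val_uminus by auto

lemma inverse_in_max_ideal: "x \<notin> val_ring v \<Longrightarrow> inverse x \<in> max_ideal v"
  unfolding val_ring_def max_ideal_def using val_inverse[of x] by auto

text \<open>The valuation ring is integrally closed in degree two: dividing the equation by \<open>x\<^sup>2\<close>
  would exhibit \<open>-1\<close> as an element of the maximal ideal if \<open>x\<close> were not integral.\<close>

lemma val_ring_if_monic_quadratic_root:
  assumes root: "x\<^sup>2 + p * x + q = 0" and "p \<in> val_ring v" "q \<in> val_ring v"
  shows "x \<in> val_ring v"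
proof (rule ccontr)
  assume x: "x \<notin> val_ring v"
  then have "x \<noteq> 0" unfolding val_ring_def by auto
  define y where "y = inverse x"
  have y: "y \<in> max_ideal v" unfolding y_def using inverse_in_max_ideal[OF x] .
  have "p * x + q = - (x * x)"
    using root by (simp add: power2_eq_square eq_neg_iff_add_eq_0 algebra_simps)
  then have "- 1 = y * p + y * (y * q)"
    using \<open>x \<noteq> 0\<close> unfolding y_def by (simp add: field_simps)
  also have "\<dots> \<in> max_ideal v"
    using y assms(2,3) max_ideal_subset_val_ring
    by (blast intro: max_ideal_add max_ideal_mult val_ring_mult)
  finally have "1 \<in> max_ideal v" using max_ideal_uminus by fastforce
  then show False using val_units_disjoint_max_ideal[OF one_in_val_units] by simp
qed

lemma val_ring_if_square_in_val_ring: "t\<^sup>2 \<in> val_ring v \<Longrightarrow> t \<in> val_ring v"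
  using val_ring_if_monic_quadratic_root[of t 0 "- t\<^sup>2"] val_ring_uminus[of "t\<^sup>2"]
  by (simp add: val_ring_def)

lemma val_units_if_square_in_val_units:
  assumes "t\<^sup>2 \<in> val_units v" shows "t \<in> val_units v"
proof -
  have "t \<noteq> 0" using assms unfolding val_units_def by auto
  then have "v (t\<^sup>2) = 2 * v t" using val_mult[of t t] by (simp add: power2_eq_square)
  then show ?thesis using assms \<open>t \<noteq> 0\<close> unfolding val_units_def by auto
qed

lemma o_ideal_singleton_multiple: "z \<in> o_ideal v {d} \<Longrightarrow> \<exists>r\<in>val_ring v. z = r * d"
proof (induction rule: o_ideal.induct)
  case zero
  then show ?case by (auto simp: val_ring_def)
next
  case (step r s y)
  then obtain r' where "r' \<in> val_ring v" "y = r' * d" by auto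
  with step show ?case by (intro bexI[of _ "r + r'"]) (auto simp: distrib_right val_ring_add)
qed

lemma generator_in_o_ideal: "s \<in> S \<Longrightarrow> s \<in> o_ideal v S"
  using o_ideal.step[OF one_in_val_ring _ o_ideal.zero, of s S] by simp

end

definition pair_det :: "'a::field \<times> 'a \<Rightarrow> 'a \<times> 'a \<Rightarrow> 'a" where
  "pair_det x y = fst x * snd y - snd x * fst y"

lemma pair_det_combination_left:
  "pair_det (smul u e1 + smul w e2) e2 = u * pair_det e1 e2"
  by (simp add: pair_det_def smul_def algebra_simps)

lemma pair_det_combination_right:
  "pair_det e1 (smul u e1 + smul w e2) = w * pair_det e1 e2"
  by (simp add: pair_det_def smul_def algebra_simps)

lemma pair_cramer:
  assumes "pair_det e1 e2 \<noteq> 0"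
  shows "z = smul (pair_det z e2 / pair_det e1 e2) e1 + smul (pair_det e1 z / pair_det e1 e2) e2"
proof -
  obtain z1 z2 a1 a2 b1 b2 where "z = (z1, z2)" "e1 = (a1, a2)" "e2 = (b1, b2)"
    by (cases z, cases e1, cases e2)
  then show ?thesis using assms
    by (simp add: pair_det_def smul_def divide_simps) (simp add: algebra_simps)
qed

context discretely_valued
begin

lemma is_o_basis_if_det_unit:
  assumes det_integral: "\<And>x z. x \<in> OL \<Longrightarrow> z \<in> OL \<Longrightarrow> k * pair_det x z \<in> val_ring v"
    and e: "e1 \<in> OL" "e2 \<in> OL" and unit: "k * pair_det e1 e2 \<in> val_units v"
  shows "is_o_basis v OL e1 e2"
  unfolding is_o_basis_def
proof (intro conjI ballI e)
  fix z assume z: "z \<in> OL"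
  define D where "D = pair_det e1 e2"
  have "k \<noteq> 0" "D \<noteq> 0" using unit unfolding D_def val_units_def by auto
  have inv: "inverse (k * D) \<in> val_ring v"
    using val_units_inverse[OF unit] val_units_subset_val_ring unfolding D_def by blast
  have coord: "y / D \<in> val_ring v" if "k * y \<in> val_ring v" for y
  proof -
    have "y / D = (k * y) * inverse (k * D)" using \<open>k \<noteq> 0\<close> by (simp add: field_simps)
    then show ?thesis using val_ring_mult[OF that inv] by simp
  qed
  have coords: "pair_det z e2 / D \<in> val_ring v" "pair_det e1 z / D \<in> val_ring v"
    using coord det_integral z e by auto
  have decomposition: "z = smul (pair_det z e2 / D) e1 + smul (pair_det e1 z / D) e2"
    using pair_cramer \<open>D \<noteq> 0\<close> unfolding D_def by blast
  show "\<exists>!uw. fst uw \<in> val_ring v \<and> snd uw \<in> val_ring v \<and> z = smul (fst uw) e1 + smul (snd uw) e2"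
  proof (rule ex1I[of _ "(pair_det z e2 / D, pair_det e1 z / D)"])
    fix uw assume "fst uw \<in> val_ring v \<and> snd uw \<in> val_ring v \<and> z = smul (fst uw) e1 + smul (snd uw) e2"
    then have "pair_det z e2 = fst uw * D" "pair_det e1 z = snd uw * D"
      unfolding D_def by (simp_all add: pair_det_combination_left pair_det_combination_right)
    then show "uw = (pair_det z e2 / D, pair_det e1 z / D)"
      using \<open>D \<noteq> 0\<close> by (simp add: prod_eq_iff)
  qed (use coords decomposition in simp)
qed

lemma pair_det_ext_ideal:
  assumes det_integral: "\<And>x z. x \<in> OL \<Longrightarrow> z \<in> OL \<Longrightarrow> k * pair_det x z \<in> val_ring v"
    and "w \<in> OL" and "y \<in> ext_ideal v OL"
  shows "k * pair_det w y \<in> max_ideal v"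
  using assms(3)
proof (induction rule: ext_ideal.induct)
  case zero
  then show ?case by (simp add: pair_det_def max_ideal_def zero_prod_def)
next
  case (step p z y)
  have "k * pair_det w (smul p z + y) = p * (k * pair_det w z) + k * pair_det w y"
    by (simp add: pair_det_def smul_def algebra_simps)
  then show ?case
    using step det_integral[OF \<open>w \<in> OL\<close>] max_ideal_add max_ideal_mult by simp
qed

lemma translate_notin_ext_ideal:
  assumes det_integral: "\<And>x z. x \<in> OL \<Longrightarrow> z \<in> OL \<Longrightarrow> k * pair_det x z \<in> val_ring v"
    and "e1 \<in> OL" and unit: "k * pair_det e1 e2 \<in> val_units v"
  shows "e2 + smul x e1 \<notin> ext_ideal v OL"
proof
  assume "e2 + smul x e1 \<in> ext_ideal v OL"
  then have "k * pair_det e1 (e2 + smul x e1) \<in> max_ideal v"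
    using pair_det_ext_ideal[OF det_integral \<open>e1 \<in> OL\<close>] by blast
  moreover have "pair_det e1 (e2 + smul x e1) = pair_det e1 e2"
    by (simp add: pair_det_def smul_def algebra_simps)
  ultimately show False using val_units_disjoint_max_ideal[OF unit] by simp
qed

end

lemma qdisc_eq_pair_det: "qdisc d x y = (2 * pair_det x y)\<^sup>2 * d"
  by (simp add: qdisc_def qtrace_def qmul_def pair_det_def power2_eq_square algebra_simps)

lemma int_ring_field_if_monic_quadratic_root:
  assumes "c0 \<in> val_ring v" "c1 \<in> val_ring v"
    and "qmul d z z + smul c1 z + smul c0 (1, 0) = 0"
  shows "z \<in> int_ring_field v d"
  unfolding int_ring_field_def
proof (intro CollectI exI conjI)
  let ?cs = "\<lambda>i::nat. if i = 0 then c0 else c1"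
  show "(0::nat) < 2" by simp
  show "\<forall>i<2. ?cs i \<in> val_ring v" using assms by auto
  have "qmul d z (1, 0) = z" by (simp add: qmul_def)
  then show "qpow d z 2 + (\<Sum>i<2. smul (?cs i) (qpow d z i)) = 0"
    using assms(3) by (simp add: qpow_def numeral_2_eq_2 add_ac)
qed

context discretely_valued
begin

lemma one_in_int_ring_field: "(1, 0) \<in> int_ring_field v d"
  by (rule int_ring_field_if_monic_quadratic_root[of "- 1" _ 0])
    (use val_ring_uminus[OF one_in_val_ring] in \<open>auto simp: val_ring_def qmul_def smul_def zero_prod_def\<close>)

lemma two_pair_det_int_ring_field:
  assumes "d \<noteq> 0" and disc: "disc_ideal_field v d \<subseteq> o_ideal v {d}"
    and "x \<in> int_ring_field v d" "z \<in> int_ring_field v d"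
  shows "2 * pair_det x z \<in> val_ring v"
proof -
  have "qdisc d x z \<in> disc_ideal_field v d"
    unfolding disc_ideal_field_def using assms(3,4) by (blast intro: generator_in_o_ideal)
  then obtain r where "r \<in> val_ring v" "(2 * pair_det x z)\<^sup>2 * d = r * d"
    using disc o_ideal_singleton_multiple unfolding qdisc_eq_pair_det by blast
  then show ?thesis using \<open>d \<noteq> 0\<close> val_ring_if_square_in_val_ring by simp
qed

end

lemma nonsplit_case:
  fixes v :: "'a::field_char_0 \<Rightarrow> int"
  assumes "discretely_valued v"
    and d: "d = b\<^sup>2 - 4 * a * c" "d \<noteq> 0"
    and abc: "a \<in> val_ring v" "b \<in> val_ring v" "c \<in> val_units v"
    and disc: "disc_ideal_field v d \<subseteq> o_ideal v {d}"
  defines "OL \<equiv> int_ring_field v d"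
  shows "is_o_basis v OL (1, 0) (- b / 2, 1 / 2)"
    and "is_o_basis v OL (1, 0) (b / (2 * c), 1 / (2 * c))"
    and "\<not> (\<exists>x\<in>val_ring v. (b / (2 * c), 1 / (2 * c)) + smul x (1, 0) \<in> ext_ideal v OL)"
proof -
  interpret discretely_valued v by fact
  have "c \<noteq> 0" using abc(3) unfolding val_units_def by auto
  have ic: "inverse c \<in> val_ring v"
    using val_units_inverse[OF abc(3)] val_units_subset_val_ring by blast
  have c: "c \<in> val_ring v" using abc(3) val_units_subset_val_ring by blast
  have det_integral: "\<And>x z. x \<in> OL \<Longrightarrow> z \<in> OL \<Longrightarrow> 2 * pair_det x z \<in> val_ring v"
    unfolding OL_def using two_pair_det_int_ring_field[OF \<open>d \<noteq> 0\<close> disc] .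
  have one: "(1, 0) \<in> OL" unfolding OL_def by (rule one_in_int_ring_field)
  have xi0: "(- b / 2, 1 / 2) \<in> OL" unfolding OL_def
    by (rule int_ring_field_if_monic_quadratic_root[of "a * c" _ b])
      (use abc c in \<open>auto simp: d(1) val_ring_mult qmul_def smul_def zero_prod_def
         field_simps power2_eq_square\<close>)
  have alpha: "(b / (2 * c), 1 / (2 * c)) \<in> OL" unfolding OL_def
  proof (rule int_ring_field_if_monic_quadratic_root)
    show "a * inverse c \<in> val_ring v" "- (b * inverse c) \<in> val_ring v"
      using abc ic by (simp_all add: val_ring_mult val_ring_uminus)
    show "qmul d (b / (2 * c), 1 / (2 * c)) (b / (2 * c), 1 / (2 * c)) +
        smul (- (b * inverse c)) (b / (2 * c), 1 / (2 * c)) + smul (a * inverse c) (1, 0) = 0"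
      using \<open>c \<noteq> 0\<close> by (simp add: d(1) qmul_def smul_def zero_prod_def field_simps power2_eq_square)
  qed
  have "2 * pair_det (1, 0) (- b / 2, 1 / 2) = 1"
    by (simp add: pair_det_def)
  then show "is_o_basis v OL (1, 0) (- b / 2, 1 / 2)"
    using is_o_basis_if_det_unit[OF det_integral one xi0] one_in_val_units by simp
  have unit: "2 * pair_det (1, 0) (b / (2 * c), 1 / (2 * c)) \<in> val_units v"
    using val_units_inverse[OF abc(3)] by (simp add: pair_det_def inverse_eq_divide)
  show "is_o_basis v OL (1, 0) (b / (2 * c), 1 / (2 * c))"
    using is_o_basis_if_det_unit[OF det_integral one alpha unit] .
  show "\<not> (\<exists>x\<in>val_ring v. (b / (2 * c), 1 / (2 * c)) + smul x (1, 0) \<in> ext_ideal v OL)"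
    using translate_notin_ext_ideal[OF det_integral one unit] by blast
qed

lemma split_case:
  fixes v :: "'a::field_char_0 \<Rightarrow> int"
  assumes "discretely_valued v"
    and s: "s\<^sup>2 = d" and d: "d = b\<^sup>2 - 4 * a * c" "d \<in> val_units v"
    and abc: "a \<in> val_ring v" "b \<in> val_ring v" "c \<in> val_units v"
  defines "OL \<equiv> int_ring_split v"
  shows "is_o_basis v OL (1, 1) ((- b + s) / 2, (- b - s) / 2)"
    and "is_o_basis v OL (1, 1) ((b + s) / (2 * c), (b - s) / (2 * c))"
    and "\<not> (\<exists>x\<in>val_ring v. ((b + s) / (2 * c), (b - s) / (2 * c)) + smul x (1, 1) \<in> ext_ideal v OL)"
proof -
  interpret discretely_valued v by fact
  have "c \<noteq> 0" using abc(3) unfolding val_units_def by auto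
  have ic: "inverse c \<in> val_units v" using val_units_inverse[OF abc(3)] .
  have su: "s \<in> val_units v" using val_units_if_square_in_val_units s d(2) by simp
  have det_integral: "\<And>x z. x \<in> OL \<Longrightarrow> z \<in> OL \<Longrightarrow> 1 * pair_det x z \<in> val_ring v"
    unfolding OL_def int_ring_split_def pair_det_def by (auto simp: val_ring_diff val_ring_mult)
  have one: "(1, 1) \<in> OL" unfolding OL_def int_ring_split_def using one_in_val_ring by simp
  have "(- b + r) / 2 \<in> val_ring v" if "r\<^sup>2 = d" for r
  proof (rule val_ring_if_monic_quadratic_root)
    show "((- b + r) / 2)\<^sup>2 + b * ((- b + r) / 2) + a * c = 0"
      using that unfolding d(1) by (simp add: field_simps power2_eq_square) algebra
    show "a * c \<in> val_ring v" using abc val_units_subset_val_ring by (blast intro: val_ring_mult)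
  qed (use abc in simp)
  from this[of s] this[of "- s"] have xi0: "((- b + s) / 2, (- b - s) / 2) \<in> OL"
    using s unfolding OL_def int_ring_split_def by simp
  have "(b + r) / (2 * c) \<in> val_ring v" if "r\<^sup>2 = d" for r
  proof (rule val_ring_if_monic_quadratic_root)
    show "((b + r) / (2 * c))\<^sup>2 + (- (b * inverse c)) * ((b + r) / (2 * c)) + a * inverse c = 0"
      using that \<open>c \<noteq> 0\<close> unfolding d(1) by (simp add: field_simps power2_eq_square) algebra
    show "- (b * inverse c) \<in> val_ring v" "a * inverse c \<in> val_ring v"
      using abc ic val_units_subset_val_ring by (blast intro: val_ring_mult val_ring_uminus)+
  qed
  from this[of s] this[of "- s"] have alpha: "((b + s) / (2 * c), (b - s) / (2 * c)) \<in> OL"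
    using s unfolding OL_def int_ring_split_def by simp
  have "1 * pair_det (1, 1) ((- b + s) / 2, (- b - s) / 2) = - s"
    by (simp add: pair_det_def field_simps)
  then show "is_o_basis v OL (1, 1) ((- b + s) / 2, (- b - s) / 2)"
    using is_o_basis_if_det_unit[OF det_integral one xi0] val_units_uminus[OF su] by simp
  have "1 * pair_det (1, 1) ((b + s) / (2 * c), (b - s) / (2 * c)) = - (s * inverse c)"
    using \<open>c \<noteq> 0\<close> by (simp add: pair_det_def field_simps)
  then have unit: "1 * pair_det (1, 1) ((b + s) / (2 * c), (b - s) / (2 * c)) \<in> val_units v"
    using val_units_uminus val_units_mult[OF su ic] by simp
  show "is_o_basis v OL (1, 1) ((b + s) / (2 * c), (b - s) / (2 * c))"
    using is_o_basis_if_det_unit[OF det_integral one alpha unit] .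
  show "\<not> (\<exists>x\<in>val_ring v. ((b + s) / (2 * c), (b - s) / (2 * c)) + smul x (1, 1) \<in> ext_ideal v OL)"
    using translate_notin_ext_ideal[OF det_integral one unit] by blast
qed

theorem mainTheorem7:
  fixes v :: "'a::field_char_0 \<Rightarrow> int" and a b c d :: 'a
  assumes F: "nonarch_local_field v"
    and d_def: "d = b ^ 2 - 4 * a * c" and d_nz: "d \<noteq> 0"
    and A1: "a \<in> val_ring v" "b \<in> val_ring v" "c \<in> val_units v"
    and A2_field: "\<not> is_square_nz d \<longrightarrow> o_ideal v {d} = disc_ideal_field v d"
    and A2_split: "is_square_nz d \<longrightarrow> d \<in> val_units v"
  shows
    "(\<not> is_square_nz d \<longrightarrow>
       (let OL = int_ring_field v d; one = (1, 0);
            xi0 = (- b / 2, 1 / 2); \<alpha> = (b / (2 * c), 1 / (2 * c))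
        in is_o_basis v OL one xi0 \<and> is_o_basis v OL one \<alpha> \<and>
           \<not> (\<exists>x\<in>val_ring v. \<alpha> + smul x one \<in> ext_ideal v OL)))
     \<and>
     (\<forall>s. s ^ 2 = d \<longrightarrow>
       (let OL = int_ring_split v; one = (1, 1);
            xi0 = ((- b + s) / 2, (- b - s) / 2);
            \<alpha> = ((b + s) / (2 * c), (b - s) / (2 * c))
        in is_o_basis v OL one xi0 \<and> is_o_basis v OL one \<alpha> \<and>
           \<not> (\<exists>x\<in>val_ring v. \<alpha> + smul x one \<in> ext_ideal v OL)))"
proof -
  have v: "discretely_valued v"
    using F unfolding nonarch_local_field_def discretely_valued_def by blast
  have square: "is_square_nz d" if "s\<^sup>2 = d" for s
    using that d_nz unfolding is_square_nz_def by auto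
  show ?thesis
    unfolding Let_def
    using nonsplit_case[OF v d_def d_nz A1] A2_field split_case[OF v _ d_def _ A1] A2_split square
    by auto
qed

end
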